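(* Let $A$ be a cyclic Leibniz algebra generated by $a$. Then $A$ has a unique Cartan subalgebra, namely the Fitting null component $A_0=\{b\in A: L_a^m(b)=0 \text{ for some } m\ge1\}$ of $L_a$ acting on $A$.
   Context: A (left) Leibniz algebra is an algebra satisfying $x(yz)=(xy)z+y(xz)$ for all $x,y,z$; all algebras are finite-dimensional over a field. $A$ is cyclic generated by $a$ if $A$ is generated as an algebra by the single element $a$. $L_a:A\to A$ is left multiplication $b\mapsto ab$. The normalizer of a subalgebra $C$ is $N_A(C)=\{x\in A: xC\subseteq C,\ Cx\subseteq C\}$. A Cartan subalgebra is a nilpotent subalgebra $C$ with $N_A(C)=C$, where nilpotent means $C^t=0$ for some $t$ ($C^1=C$, $C^{j+1}=CC^j$). *)

theory Defs
  imports "HOL.Vector_Spaces"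
begin

definition leibniz_algebra ::
  "('k::field \<Rightarrow> 'v::ab_group_add \<Rightarrow> 'v) \<Rightarrow> ('v \<Rightarrow> 'v \<Rightarrow> 'v) \<Rightarrow> bool" where
  "leibniz_algebra scale mult \<longleftrightarrow>
     vector_space scale \<and>
     (\<exists>B. finite B \<and> module.span scale B = UNIV) \<and>
     (\<forall>x y z. mult (x + y) z = mult x z + mult y z) \<and>
     (\<forall>x y z. mult x (y + z) = mult x y + mult x z) \<and>
     (\<forall>c x y. mult (scale c x) y = scale c (mult x y)) \<and>
     (\<forall>c x y. mult x (scale c y) = scale c (mult x y)) \<and>
     (\<forall>x y z. mult x (mult y z) = mult (mult x y) z + mult y (mult x z))"

definition subalgebra ::
  "('k::field \<Rightarrow> 'v::ab_group_add \<Rightarrow> 'v) \<Rightarrow> ('v \<Rightarrow> 'v \<Rightarrow> 'v) \<Rightarrow> 'v set \<Rightarrow> bool" where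
  "subalgebra scale mult C \<longleftrightarrow>
     module.subspace scale C \<and> (\<forall>x\<in>C. \<forall>y\<in>C. mult x y \<in> C)"

definition generated_subalgebra ::
  "('k::field \<Rightarrow> 'v::ab_group_add \<Rightarrow> 'v) \<Rightarrow> ('v \<Rightarrow> 'v \<Rightarrow> 'v) \<Rightarrow> 'v \<Rightarrow> 'v set" where
  "generated_subalgebra scale mult a = \<Inter>{C. subalgebra scale mult C \<and> a \<in> C}"

definition cyclic_generated_by ::
  "('k::field \<Rightarrow> 'v::ab_group_add \<Rightarrow> 'v) \<Rightarrow> ('v \<Rightarrow> 'v \<Rightarrow> 'v) \<Rightarrow> 'v \<Rightarrow> bool" where
  "cyclic_generated_by scale mult a \<longleftrightarrow> generated_subalgebra scale mult a = UNIV"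

definition subspace_prod ::
  "('k::field \<Rightarrow> 'v::ab_group_add \<Rightarrow> 'v) \<Rightarrow> ('v \<Rightarrow> 'v \<Rightarrow> 'v) \<Rightarrow> 'v set \<Rightarrow> 'v set \<Rightarrow> 'v set" where
  "subspace_prod scale mult C D = module.span scale {mult x y | x y. x \<in> C \<and> y \<in> D}"

text \<open>lower_power scale mult C j is C^(j+1) in the paper: C^1 = C, C^(j+1) = C C^j.\<close>
fun lower_power ::
  "('k::field \<Rightarrow> 'v::ab_group_add \<Rightarrow> 'v) \<Rightarrow> ('v \<Rightarrow> 'v \<Rightarrow> 'v) \<Rightarrow> 'v set \<Rightarrow> nat \<Rightarrow> 'v set" where
  "lower_power scale mult C 0 = C"
| "lower_power scale mult C (Suc j) = subspace_prod scale mult C (lower_power scale mult C j)"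

definition nilpotent_subalgebra ::
  "('k::field \<Rightarrow> 'v::ab_group_add \<Rightarrow> 'v) \<Rightarrow> ('v \<Rightarrow> 'v \<Rightarrow> 'v) \<Rightarrow> 'v set \<Rightarrow> bool" where
  "nilpotent_subalgebra scale mult C \<longleftrightarrow>
     subalgebra scale mult C \<and> (\<exists>t. lower_power scale mult C t = {0})"

definition normalizer :: "('v \<Rightarrow> 'v \<Rightarrow> 'v) \<Rightarrow> 'v set \<Rightarrow> 'v set" where
  "normalizer mult C = {x. (\<forall>c\<in>C. mult x c \<in> C) \<and> (\<forall>c\<in>C. mult c x \<in> C)}"

definition cartan_subalgebra ::
  "('k::field \<Rightarrow> 'v::ab_group_add \<Rightarrow> 'v) \<Rightarrow> ('v \<Rightarrow> 'v \<Rightarrow> 'v) \<Rightarrow> 'v set \<Rightarrow> bool" where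
  "cartan_subalgebra scale mult C \<longleftrightarrow>
     nilpotent_subalgebra scale mult C \<and> normalizer mult C = C"

definition fitting_null :: "('v::zero \<Rightarrow> 'v \<Rightarrow> 'v) \<Rightarrow> 'v \<Rightarrow> 'v set" where
  "fitting_null mult a = {b. \<exists>m\<ge>1. (mult a ^^ m) b = 0}"

end

theory Submission
  imports Defs
begin

(* The proof rests on one structural fact:
   A = span {a} + (left annihilator), so every left multiplication L_x is a scalar
   multiple of L_a and every product left-annihilates A. *)

locale fin_dim_vector_space = vector_space +
  assumes finite_spanning_set: "\<exists>B. finite B \<and> span B = UNIV"
begin

lemma dim_bounded: "\<exists>D. \<forall>S. dim S \<le> D"
  using finite_spanning_set dim_le_card by blast

lemma dim_strict_mono:
  assumes "subspace S" "subspace T" "S \<subset> T"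
  shows "dim S < dim T"
proof -
  obtain B where B: "independent B" "UNIV \<subseteq> span B"
    using basis_exists[of UNIV] by metis
  obtain B0 where "finite B0" "span B0 = UNIV" using finite_spanning_set by blast
  then have "finite B" using independent_span_bound B(1) by auto
  then interpret fd: finite_dimensional_vector_space scale B
    by unfold_locales (use B in auto)
  show ?thesis using fd.dim_psubset[of S T] assms by (metis span_eq_iff)
qed

lemma ascending_chain_stabilizes:
  assumes "\<And>k. subspace (f k)" "\<And>k. f k \<subseteq> f (Suc k)"
  shows "\<exists>k. f (Suc k) = f k"
proof (rule ccontr)
  assume "\<nexists>k. f (Suc k) = f k"
  then have grows: "dim (f k) < dim (f (Suc k))" for k
    using dim_strict_mono assms by blast
  have "k \<le> dim (f k)" for k
    by (induction k) (use grows Suc_le_eq le_less_trans in blast)+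
  moreover obtain D where "\<And>S. dim S \<le> D" using dim_bounded by blast
  ultimately show False by (metis Suc_n_not_le_n order_trans)
qed

lemma descending_chain_stabilizes:
  assumes "\<And>k. subspace (f k)" "\<And>k. f (Suc k) \<subseteq> f k"
  shows "\<exists>k. f (Suc k) = f k"
proof (rule ccontr)
  assume "\<nexists>k. f (Suc k) = f k"
  then have shrinks: "dim (f (Suc k)) < dim (f k)" for k
    using dim_strict_mono assms by blast
  have "dim (f k) + k \<le> dim (f 0)" for k
  proof (induction k)
    case (Suc k)
    then show ?case using shrinks[of k] by linarith
  qed simp
  from this[of "Suc (dim (f 0))"] show False by simp
qed

lemma module_hom_funpow: "module_hom scale scale f \<Longrightarrow> module_hom scale scale (f ^^ k)"
  by (induction k) (auto simp: module_hom_iff module_axioms)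

lemma generalized_kernel_bound:
  assumes hom: "module_hom scale scale f"
  shows "\<exists>N\<ge>1. \<forall>m y. (f ^^ m) y = 0 \<longrightarrow> (f ^^ N) y = 0"
proof -
  have "\<exists>k. {x. (f ^^ Suc k) x = 0} = {x. (f ^^ k) x = 0}"
    by (rule ascending_chain_stabilizes)
      (auto intro: module_hom.subspace_kernel module_hom_funpow[OF hom] simp: module_hom.zero[OF hom])
  then obtain k where k: "{x. (f ^^ Suc k) x = 0} = {x. (f ^^ k) x = 0}" by blast
  have stable: "(f ^^ (k + j)) y = 0 \<longleftrightarrow> (f ^^ k) y = 0" for j y
  proof (induction j arbitrary: y)
    case (Suc j)
    have "(f ^^ (k + Suc j)) y = (f ^^ (k + j)) (f y)"
      by (simp add: funpow_Suc_right del: funpow.simps)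
    also have "\<dots> = 0 \<longleftrightarrow> (f ^^ Suc k) y = 0"
      using Suc.IH by (simp add: funpow_Suc_right del: funpow.simps)
    finally show ?case using k by blast
  qed simp
  show ?thesis
  proof (intro exI[of _ "Suc k"] conjI allI impI)
    fix m y assume "(f ^^ m) y = 0"
    then have "(f ^^ (k + m)) y = 0"
      by (simp add: funpow_add module_hom.zero[OF module_hom_funpow[OF hom]])
    then show "(f ^^ Suc k) y = 0"
      using stable k by blast
  qed simp
qed

lemma fitting_decomposition:
  assumes hom: "module_hom scale scale f"
  shows "\<exists>n\<ge>1. \<forall>y. \<exists>v. (f ^^ n) (y - (f ^^ n) v) = 0"
proof -
  have "\<exists>k. range (f ^^ Suc k) = range (f ^^ k)"
  proof (rule descending_chain_stabilizes)
    show "subspace (range (f ^^ k))" for k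
      using module_hom.subspace_image[OF module_hom_funpow[OF hom] subspace_UNIV] .
    show "range (f ^^ Suc k) \<subseteq> range (f ^^ k)" for k
      by (auto simp: funpow_Suc_right simp del: funpow.simps)
  qed
  then obtain k where k: "range (f ^^ Suc k) = range (f ^^ k)" by blast
  have stable: "range (f ^^ (j + k)) = range (f ^^ k)" for j
  proof (induction j)
    case (Suc j)
    have "range (f ^^ (Suc j + k)) = f ` range (f ^^ (j + k))"
      by (simp add: image_comp)
    also have "\<dots> = range (f ^^ Suc k)"
      using Suc.IH by (simp add: image_comp)
    finally show ?case using k by simp
  qed simp
  show ?thesis
  proof (intro exI[of _ "Suc k"] conjI allI)
    fix y
    have "(f ^^ Suc k) y \<in> range (f ^^ (Suc k + Suc k))"
      using stable[of 1] stable[of "Suc (Suc k)"] by auto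
    then obtain v where "(f ^^ Suc k) y = (f ^^ (Suc k + Suc k)) v" by blast
    then have "(f ^^ Suc k) (y - (f ^^ Suc k) v) = 0"
      by (simp only: module_hom.diff[OF module_hom_funpow[OF hom]] funpow_add comp_apply) simp
    then show "\<exists>v. (f ^^ Suc k) (y - (f ^^ Suc k) v) = 0" ..
  qed simp
qed

end

locale leibniz = fin_dim_vector_space scale
  for scale :: "'k::field \<Rightarrow> 'v::ab_group_add \<Rightarrow> 'v" +
  fixes mult :: "'v \<Rightarrow> 'v \<Rightarrow> 'v"
  assumes mult_add_left: "mult (x + y) z = mult x z + mult y z"
    and mult_add_right: "mult x (y + z) = mult x y + mult x z"
    and mult_scale_left: "mult (scale c x) y = scale c (mult x y)"
    and mult_scale_right: "mult x (scale c y) = scale c (mult x y)"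
    and leibniz_identity: "mult x (mult y z) = mult (mult x y) z + mult y (mult x z)"
begin

lemma mult_zero_left [simp]: "mult 0 z = 0"
  using mult_add_left[of 0 0 z] by simp

lemma mult_zero_right [simp]: "mult z 0 = 0"
  using mult_add_right[of z 0 0] by simp

lemma left_mult_hom: "module_hom scale scale (mult x)"
  by (simp add: module_hom_iff module_axioms mult_add_right mult_scale_right)

lemma left_mult_of_product: "mult (mult x y) z = mult x (mult y z) - mult y (mult x z)"
  using leibniz_identity[of x y z] by (simp add: algebra_simps)

lemma lower_power_subspace: "subspace C \<Longrightarrow> subspace (lower_power scale mult C j)"
  by (induction j) (simp_all add: subspace_prod_def subspace_span)

lemma fitting_null_iff: "y \<in> fitting_null mult x \<longleftrightarrow> (\<exists>m. (mult x ^^ m) y = 0)"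
proof
  assume "\<exists>m. (mult x ^^ m) y = 0"
  then obtain m where "(mult x ^^ m) y = 0" by blast
  then have "(mult x ^^ Suc m) y = 0" by simp
  then show "y \<in> fitting_null mult x" unfolding fitting_null_def by (intro CollectI exI[of _ "Suc m"]) simp
qed (auto simp: fitting_null_def)

lemma mult_in_fitting_null_iff: "mult x y \<in> fitting_null mult x \<longleftrightarrow> y \<in> fitting_null mult x"
proof -
  have shift: "(mult x ^^ m) (mult x y) = mult x ((mult x ^^ m) y)" for m
    by (simp only: funpow_swap1)
  show ?thesis
  proof
    assume "mult x y \<in> fitting_null mult x"
    then obtain m where "(mult x ^^ m) (mult x y) = 0" unfolding fitting_null_iff by blast
    then have "(mult x ^^ Suc m) y = 0" by (simp only: shift funpow.simps comp_apply)
    then show "y \<in> fitting_null mult x" unfolding fitting_null_iff by blast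
  next
    assume "y \<in> fitting_null mult x"
    then obtain m where "(mult x ^^ m) y = 0" unfolding fitting_null_iff by blast
    then have "(mult x ^^ m) (mult x y) = 0" by (simp only: shift mult_zero_right)
    then show "mult x y \<in> fitting_null mult x" unfolding fitting_null_iff by blast
  qed
qed

lemma fitting_null_eq_kernel: "\<exists>N\<ge>1. fitting_null mult x = {y. (mult x ^^ N) y = 0}"
proof -
  obtain N where "N \<ge> 1" and "\<forall>m y. (mult x ^^ m) y = 0 \<longrightarrow> (mult x ^^ N) y = 0"
    using generalized_kernel_bound[OF left_mult_hom] by blast
  then show ?thesis by (auto simp: set_eq_iff fitting_null_iff)
qed

lemma fitting_null_subspace: "subspace (fitting_null mult x)"
  using fitting_null_eq_kernel module_hom.subspace_kernel[OF module_hom_funpow[OF left_mult_hom]]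
  by metis

lemma nilpotent_subalgebra_in_fitting_null:
  assumes "nilpotent_subalgebra scale mult C" "x \<in> C"
  shows "C \<subseteq> fitting_null mult x"
proof
  fix c assume "c \<in> C"
  have power_in_lower: "(mult x ^^ j) c \<in> lower_power scale mult C j" for j
  proof (induction j)
    case (Suc j)
    then have "(mult x ^^ Suc j) c \<in> {mult u v | u v. u \<in> C \<and> v \<in> lower_power scale mult C j}"
      using \<open>x \<in> C\<close> by auto
    then show ?case by (simp add: subspace_prod_def span_base)
  qed (simp add: \<open>c \<in> C\<close>)
  obtain t where "lower_power scale mult C t = {0}"
    using assms(1) unfolding nilpotent_subalgebra_def by blast
  then show "c \<in> fitting_null mult x"
    using power_in_lower[of t] unfolding fitting_null_iff by auto
qed

definition left_annihilator :: "'v set" where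
  "left_annihilator = {w. \<forall>z. mult w z = 0}"

lemma left_annihilator_subspace: "subspace left_annihilator"
  unfolding subspace_def left_annihilator_def by (simp add: mult_add_left mult_scale_left)

lemma mult_in_left_annihilator: "w \<in> left_annihilator \<Longrightarrow> mult x w \<in> left_annihilator"
  by (simp add: left_annihilator_def left_mult_of_product)

lemma square_in_left_annihilator: "mult x x \<in> left_annihilator"
  by (simp add: left_annihilator_def left_mult_of_product)

lemma span_insert_left_annihilator_cases:
  assumes "x \<in> span (insert a left_annihilator)"
  obtains k w where "x = scale k a + w" "w \<in> left_annihilator"
proof -
  obtain k where "x - scale k a \<in> left_annihilator"
    using assms span_eq_iff[THEN iffD2, OF left_annihilator_subspace] by (auto simp: span_insert)
  then show ?thesis using that[of k "x - scale k a"] by simp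
qed

lemma left_mult_on_span_insert:
  assumes "x \<in> span (insert a left_annihilator)"
  shows "\<exists>k. \<forall>z. mult x z = scale k (mult a z)"
proof -
  obtain k w where "x = scale k a + w" "w \<in> left_annihilator"
    using span_insert_left_annihilator_cases[OF assms] .
  then show ?thesis
    by (auto simp: mult_add_left mult_scale_left left_annihilator_def)
qed

text \<open>span({a} \<union> left annihilator) is a subalgebra: a maps it into the left annihilator.\<close>
lemma span_insert_left_annihilator_subalgebra:
  "subalgebra scale mult (span (insert a left_annihilator))"
  unfolding subalgebra_def
proof (intro conjI ballI)
  fix x y assume x: "x \<in> span (insert a left_annihilator)" and y: "y \<in> span (insert a left_annihilator)"
  obtain k w where y_eq: "y = scale k a + w" "w \<in> left_annihilator"
    using span_insert_left_annihilator_cases[OF y] .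
  have "mult a y \<in> left_annihilator"
    using y_eq square_in_left_annihilator[of a] mult_in_left_annihilator[of w a]
      left_annihilator_subspace
    by (simp add: mult_add_right mult_scale_right subspace_add subspace_scale)
  moreover obtain c where "\<forall>z. mult x z = scale c (mult a z)"
    using left_mult_on_span_insert[OF x] by blast
  ultimately have "mult x y \<in> left_annihilator"
    using left_annihilator_subspace by (simp add: subspace_scale)
  then show "mult x y \<in> span (insert a left_annihilator)"
    by (meson span_base span_mono subset_insertI subsetD)
qed (rule subspace_span)

end

locale cyclic_leibniz = leibniz scale mult
  for scale :: "'k::field \<Rightarrow> 'v::ab_group_add \<Rightarrow> 'v" and mult +
  fixes a :: 'v
  assumes generated_by_a: "generated_subalgebra scale mult a = UNIV"
begin

abbreviation A0 :: "'v set" where "A0 \<equiv> fitting_null mult a"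

lemma left_mult_proportional: "\<exists>k. \<forall>z. mult x z = scale k (mult a z)"
proof -
  have "a \<in> span (insert a left_annihilator)" by (simp add: span_base)
  then have "generated_subalgebra scale mult a \<subseteq> span (insert a left_annihilator)"
    using span_insert_left_annihilator_subalgebra unfolding generated_subalgebra_def by blast
  then show ?thesis using generated_by_a left_mult_on_span_insert by blast
qed

text \<open>Hence all products lie in the left annihilator, since L_(xy) = [L_x, L_y] = 0.\<close>
lemma product_left_annihilates [simp]: "mult (mult x y) z = 0"
proof -
  obtain c d where "\<forall>z. mult x z = scale c (mult a z)" "\<forall>z. mult y z = scale d (mult a z)"
    using left_mult_proportional by meson
  then show ?thesis
    unfolding left_mult_of_product by (simp add: mult_scale_right mult.commute)
qed

text \<open>A0 is a subalgebra, since x y = c (a y) and A0 is L_a-invariant.\<close>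
lemma fitting_null_subalgebra: "subalgebra scale mult A0"
  unfolding subalgebra_def
proof (intro conjI ballI)
  fix x y assume "y \<in> A0"
  then have "mult a y \<in> A0" by (simp add: mult_in_fitting_null_iff)
  moreover obtain c where "\<forall>z. mult x z = scale c (mult a z)"
    using left_mult_proportional by blast
  ultimately show "mult x y \<in> A0" by (simp add: subspace_scale[OF fitting_null_subspace])
qed (rule fitting_null_subspace)

text \<open>If L_a^N kills A0, then L_a^k kills the power A0^(j+1) as soon as N \<le> k + j, because
  every product x y with x \<in> A0 equals c (a y).\<close>
lemma fitting_null_nilpotent: "nilpotent_subalgebra scale mult A0"
proof -
  obtain N where "N \<ge> 1" and A0_eq: "A0 = {y. (mult a ^^ N) y = 0}"
    using fitting_null_eq_kernel by blast
  have power_hom: "module_hom scale scale (mult a ^^ k)" for k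
    by (rule module_hom_funpow[OF left_mult_hom])
  have killed: "(mult a ^^ k) v = 0"
    if "v \<in> lower_power scale mult A0 j" "N \<le> k + j" for j k v
    using that
  proof (induction j arbitrary: k v)
    case 0
    define d where "d = k - N"
    have "k = d + N" using 0(2) by (simp add: d_def)
    then have "(mult a ^^ k) v = (mult a ^^ d) ((mult a ^^ N) v)"
      by (simp only: funpow_add comp_apply)
    also have "\<dots> = 0" using 0 A0_eq module_hom.zero[OF power_hom] by simp
    finally show ?case .
  next
    case (Suc j)
    have "{mult x y | x y. x \<in> A0 \<and> y \<in> lower_power scale mult A0 j} \<subseteq> {v. (mult a ^^ k) v = 0}"
    proof clarify
      fix x y assume "x \<in> A0" "y \<in> lower_power scale mult A0 j"
      moreover have "N \<le> Suc k + j" using Suc.prems(2) by simp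
      ultimately have "(mult a ^^ Suc k) y = 0" using Suc.IH by blast
      then have ay: "(mult a ^^ k) (mult a y) = 0" by (simp only: funpow_Suc_right comp_apply)
      obtain c where "\<forall>z. mult x z = scale c (mult a z)"
        using left_mult_proportional by blast
      then have "(mult a ^^ k) (mult x y) = scale c ((mult a ^^ k) (mult a y))"
        by (simp add: module_hom.scale[OF power_hom])
      then show "(mult a ^^ k) (mult x y) = 0" using ay by simp
    qed
    then have "lower_power scale mult A0 (Suc j) \<subseteq> {v. (mult a ^^ k) v = 0}"
      unfolding lower_power.simps subspace_prod_def
      by (rule span_minimal[OF _ module_hom.subspace_kernel[OF power_hom]])
    then show ?case using Suc.prems(1) by blast
  qed
  have "lower_power scale mult A0 N \<subseteq> {0}"
    using killed[of _ N 0] by auto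
  moreover have "0 \<in> lower_power scale mult A0 N"
    using subspace_0[OF lower_power_subspace[OF fitting_null_subspace]] .
  ultimately have "lower_power scale mult A0 N = {0}" by blast
  then show ?thesis
    unfolding nilpotent_subalgebra_def using fitting_null_subalgebra by blast
qed

lemma normalizer_iff:
  assumes C: "subalgebra scale mult C" and "x \<in> C" and x_acts_as_a: "mult x = mult a"
  shows "y \<in> normalizer mult C \<longleftrightarrow> mult a y \<in> C"
proof
  assume "y \<in> normalizer mult C"
  then have "mult x y \<in> C" using \<open>x \<in> C\<close> unfolding normalizer_def by blast
  then show "mult a y \<in> C" using x_acts_as_a by simp
next
  assume ay: "mult a y \<in> C"
  have sub: "subspace C" and closed: "\<And>u v. u \<in> C \<Longrightarrow> v \<in> C \<Longrightarrow> mult u v \<in> C"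
    using C unfolding subalgebra_def by auto
  have "mult y d \<in> C" "mult d y \<in> C" if "d \<in> C" for d
  proof -
    obtain c where "\<forall>z. mult y z = scale c (mult a z)"
      using left_mult_proportional by blast
    then have "mult y d = scale c (mult x d)" using x_acts_as_a by simp
    then show "mult y d \<in> C" using closed[OF \<open>x \<in> C\<close> that] sub by (simp add: subspace_scale)
    obtain c' where "\<forall>z. mult d z = scale c' (mult a z)"
      using left_mult_proportional by blast
    then show "mult d y \<in> C" using ay sub by (simp add: subspace_scale)
  qed
  then show "y \<in> normalizer mult C" unfolding normalizer_def by blast
qed

text \<open>A0 contains an element u with L_u = L_a: by Fitting's lemma a = u + L_a^n v with
  u \<in> A0, and the product L_a^n v left-annihilates.\<close>
lemma fitting_null_contains_copy_of_generator: "\<exists>u\<in>A0. mult u = mult a"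
proof -
  obtain n v where "n \<ge> 1" and u_null: "(mult a ^^ n) (a - (mult a ^^ n) v) = 0"
    using fitting_decomposition[OF left_mult_hom] by blast
  define w where "w = (mult a ^^ n) v"
  have w_product: "w = mult a ((mult a ^^ (n - 1)) v)"
    using \<open>n \<ge> 1\<close> by (cases n) (simp_all add: w_def)
  have "a - w \<in> A0"
    using u_null unfolding w_def fitting_null_iff by blast
  moreover have "mult (a - w) = mult a"
  proof
    fix z
    have "mult (a - w) z = mult a z - mult w z"
      using mult_add_left[of "a - w" w z] by (simp add: algebra_simps)
    then show "mult (a - w) z = mult a z" by (simp add: w_product)
  qed
  ultimately show ?thesis by blast
qed

text \<open>A0 is a Cartan subalgebra: its normalizer is {y. a y \<in> A0} = A0.\<close>
theorem fitting_null_cartan: "cartan_subalgebra scale mult A0"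
proof -
  obtain u where "u \<in> A0" "mult u = mult a"
    using fitting_null_contains_copy_of_generator by blast
  then have "normalizer mult A0 = A0"
    using normalizer_iff[OF fitting_null_subalgebra] mult_in_fitting_null_iff by blast
  then show ?thesis
    unfolding cartan_subalgebra_def using fitting_null_nilpotent by blast
qed

text \<open>Every Cartan subalgebra C contains an element acting like a. Otherwise all of C
  left-annihilates (L_y = c L_a with c \<noteq> 0 would give y/c \<in> C acting like a), which forces
  a C \<subseteq> C and then a into the normalizer of C, i.e. into C.\<close>
lemma cartan_contains_copy_of_generator:
  assumes cartan: "cartan_subalgebra scale mult C"
  shows "\<exists>x\<in>C. mult x = mult a"
proof (rule ccontr)
  assume no_copy: "\<not> (\<exists>x\<in>C. mult x = mult a)"
  have sub: "subspace C" and self_norm: "normalizer mult C = C"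
    using cartan unfolding cartan_subalgebra_def nilpotent_subalgebra_def subalgebra_def by auto
  have annihilates: "mult y z = 0" if "y \<in> C" for y z
  proof -
    obtain c where c: "\<forall>z. mult y z = scale c (mult a z)"
      using left_mult_proportional by blast
    show ?thesis
    proof (cases "c = 0")
      case False
      have "mult (scale (inverse c) y) = mult a"
        using c False by (auto simp: mult_scale_left)
      then show ?thesis using subspace_scale[OF sub \<open>y \<in> C\<close>] no_copy by blast
    qed (use c in simp)
  qed
  have "mult a y \<in> C" if "y \<in> C" for y
  proof -
    have "mult a y \<in> normalizer mult C"
      unfolding normalizer_def using annihilates subspace_0[OF sub] by simp
    then show ?thesis using self_norm by simp
  qed
  then have "a \<in> normalizer mult C"
    unfolding normalizer_def using annihilates subspace_0[OF sub] by simp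
  then show False using self_norm no_copy by blast
qed

theorem cartan_unique:
  assumes cartan: "cartan_subalgebra scale mult C"
  shows "C = A0"
proof
  have C: "subalgebra scale mult C" and self_norm: "normalizer mult C = C"
    and nil: "nilpotent_subalgebra scale mult C"
    using cartan unfolding cartan_subalgebra_def nilpotent_subalgebra_def by auto
  obtain x where x: "x \<in> C" "mult x = mult a"
    using cartan_contains_copy_of_generator[OF cartan] by blast
  have "fitting_null mult x = A0"
    unfolding fitting_null_def using x(2) by simp
  then show "C \<subseteq> A0"
    using nilpotent_subalgebra_in_fitting_null[OF nil \<open>x \<in> C\<close>] by simp
  have pull_back: "y \<in> C" if "(mult a ^^ k) y \<in> C" for k y
    using that
  proof (induction k arbitrary: y)
    case (Suc k)
    have "(mult a ^^ k) (mult a y) \<in> C"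
      using Suc.prems by (simp only: funpow_Suc_right comp_apply)
    then have "mult a y \<in> C" by (rule Suc.IH)
    then show ?case using normalizer_iff[OF C x] self_norm by blast
  qed simp
  show "A0 \<subseteq> C"
  proof
    fix y assume "y \<in> A0"
    then obtain m where "(mult a ^^ m) y = 0" unfolding fitting_null_iff by blast
    moreover have "0 \<in> C" using C subspace_0 unfolding subalgebra_def by blast
    ultimately show "y \<in> C" using pull_back[of m y] by simp
  qed
qed

end

lemma cyclic_leibnizI:
  assumes "leibniz_algebra scale mult" and "cyclic_generated_by scale mult a"
  shows "cyclic_leibniz scale mult a"
  using assms
  unfolding leibniz_algebra_def cyclic_generated_by_def cyclic_leibniz_def cyclic_leibniz_axioms_def
    leibniz_def leibniz_axioms_def fin_dim_vector_space_def fin_dim_vector_space_axioms_def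
  by blast

theorem mainTheorem11:
  fixes scale :: "'k::field \<Rightarrow> 'v::ab_group_add \<Rightarrow> 'v"
    and mult :: "'v \<Rightarrow> 'v \<Rightarrow> 'v"
    and a :: 'v
  assumes "leibniz_algebra scale mult"
    and "cyclic_generated_by scale mult a"
  shows "cartan_subalgebra scale mult (fitting_null mult a) \<and>
         (\<forall>C. cartan_subalgebra scale mult C \<longrightarrow> C = fitting_null mult a)"
proof -
  interpret cyclic_leibniz scale mult a
    using cyclic_leibnizI[OF assms] .
  show ?thesis using fitting_null_cartan cartan_unique by blast
qed

end
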